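(* Let $q$ be a prime power and let $\mathcal{F}=(\mathcal{F}_1,\ldots,\mathcal{F}_r)$ be a flag on $\mathbb{F}_{q^n}$. Then the best friend of $\mathcal{F}$ is the intersection of the best friends of the subspaces $\mathcal{F}_1,\ldots,\mathcal{F}_r$. Moreover, if $1\in\mathcal{F}_1$, every friend of $\mathcal{F}$ is contained in $\mathcal{F}_1$.
   Context: A flag on $\mathbb{F}_{q^n}$ is a sequence $(\mathcal{F}_1,\ldots,\mathcal{F}_r)$ of $\mathbb{F}_q$-subspaces with $\{0\}\subsetneq\mathcal{F}_1\subsetneq\cdots\subsetneq\mathcal{F}_r\subsetneq\mathbb{F}_{q^n}$. A subfield $\mathbb{F}_{q^m}$ of $\mathbb{F}_{q^n}$ is a friend of an $\mathbb{F}_q$-subspace $\mathcal{U}$ if $\mathcal{U}$ is a vector space over $\mathbb{F}_{q^m}$; the best friend of $\mathcal{U}$ is its largest friend. A subfield is a friend of the flag $\mathcal{F}$ if it is a friend of every $\mathcal{F}_i$; the best friend of $\mathcal{F}$ is its largest friend. *)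

theory Defs
  imports "HOL-Computational_Algebra.Primes"
begin

text \<open>The ambient field F_{q^n} is a finite field type 'a; F_q is a subfield K of it.\<close>

definition is_subfield :: "'a::field set \<Rightarrow> bool" where
  "is_subfield S \<longleftrightarrow> 0 \<in> S \<and> 1 \<in> S \<and>
     (\<forall>x\<in>S. \<forall>y\<in>S. x + y \<in> S \<and> x * y \<in> S) \<and>
     (\<forall>x\<in>S. - x \<in> S) \<and> (\<forall>x\<in>S. x \<noteq> 0 \<longrightarrow> inverse x \<in> S)"

definition is_subspace_over :: "'a::field set \<Rightarrow> 'a set \<Rightarrow> bool" where
  "is_subspace_over S U \<longleftrightarrow> 0 \<in> U \<and> (\<forall>x\<in>U. \<forall>y\<in>U. x + y \<in> U) \<and>
     (\<forall>s\<in>S. \<forall>x\<in>U. s * x \<in> U)"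

text \<open>Subfields F_{q^m} of F_{q^n} are exactly the subfields containing F_q = K.\<close>
definition friend :: "'a::field set \<Rightarrow> 'a set \<Rightarrow> 'a set \<Rightarrow> bool" where
  "friend K U L \<longleftrightarrow> is_subfield L \<and> K \<subseteq> L \<and> is_subspace_over L U"

definition best_friend :: "'a::field set \<Rightarrow> 'a set \<Rightarrow> 'a set \<Rightarrow> bool" where
  "best_friend K U L \<longleftrightarrow> friend K U L \<and> (\<forall>L'. friend K U L' \<longrightarrow> card L' \<le> card L)"

definition is_flag :: "'a::field set \<Rightarrow> nat \<Rightarrow> (nat \<Rightarrow> 'a set) \<Rightarrow> bool" where
  "is_flag K r F \<longleftrightarrow> 1 \<le> r \<and> (\<forall>i\<in>{1..r}. is_subspace_over K (F i)) \<and>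
     {0} \<subset> F 1 \<and> (\<forall>i. 1 \<le> i \<and> i < r \<longrightarrow> F i \<subset> F (Suc i)) \<and> F r \<subset> UNIV"

definition flag_friend :: "'a::field set \<Rightarrow> nat \<Rightarrow> (nat \<Rightarrow> 'a set) \<Rightarrow> 'a set \<Rightarrow> bool" where
  "flag_friend K r F L \<longleftrightarrow> (\<forall>i\<in>{1..r}. friend K (F i) L)"

definition flag_best_friend :: "'a::field set \<Rightarrow> nat \<Rightarrow> (nat \<Rightarrow> 'a set) \<Rightarrow> 'a set \<Rightarrow> bool" where
  "flag_best_friend K r F L \<longleftrightarrow> flag_friend K r F L \<and>
     (\<forall>L'. flag_friend K r F L' \<longrightarrow> card L' \<le> card L)"

end

theory Submission
  imports Defs
begin

text \<open>The best friend of a subspace U is its multiplicative stabiliser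
  {a. a U \<subseteq> U}. Every friend lies in it, and in a finite field it is itself a
  friend: for a \<noteq> 0 in the stabiliser, multiplication by a is injective on U and
  hence permutes U, so inverse a stabilises U as well. Consequently a subfield is a
  friend of the flag iff it lies in all stabilisers of the F i, and their
  intersection, again a subfield containing K, is the largest such. If 1 \<in> F 1,
  a friend L of the flag satisfies L = L 1 \<subseteq> F 1.\<close>

definition mult_stabilizer :: "'a::field set \<Rightarrow> 'a set" where
  "mult_stabilizer U = {a. \<forall>x\<in>U. a * x \<in> U}"

lemma friend_subset_mult_stabilizer: "friend K U L \<Longrightarrow> L \<subseteq> mult_stabilizer U"
  by (auto simp: friend_def is_subspace_over_def mult_stabilizer_def)

lemma friend_subset_if_one_mem: "friend K U L \<Longrightarrow> 1 \<in> U \<Longrightarrow> L \<subseteq> U"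
  unfolding friend_def is_subspace_over_def by (metis mult_1_right subsetI)

lemma mult_stabilizer_image_eq:
  assumes "finite U" "a \<in> mult_stabilizer U" "a \<noteq> 0"
  shows "(*) a ` U = U"
proof (rule endo_inj_surj)
  show "(*) a ` U \<subseteq> U" using assms(2) by (auto simp: mult_stabilizer_def)
  show "inj_on ((*) a) U" using assms(3) by (simp add: inj_on_def)
qed (fact assms(1))

lemma inverse_mem_mult_stabilizer:
  assumes "finite U" "a \<in> mult_stabilizer U"
  shows "inverse a \<in> mult_stabilizer U"
proof (cases "a = 0")
  case False
  have "inverse a * x \<in> U" if "x \<in> U" for x
  proof -
    from that obtain u where "u \<in> U" "x = a * u"
      using mult_stabilizer_image_eq[OF assms False] by blast
    then show ?thesis using False by (simp flip: mult.assoc)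
  qed
  then show ?thesis by (simp add: mult_stabilizer_def)
qed (use assms in simp)

lemma friend_mult_stabilizer:
  assumes "finite U" "is_subfield K" "is_subspace_over K U"
  shows "friend K U (mult_stabilizer U)"
proof -
  let ?S = "mult_stabilizer U"
  have K: "K \<subseteq> ?S" using assms(3) by (auto simp: mult_stabilizer_def is_subspace_over_def)
  have "- a \<in> ?S" if "a \<in> ?S" for a
  proof -
    have "- 1 \<in> K" using assms(2) by (simp add: is_subfield_def)
    with K that show ?thesis by (auto simp: mult_stabilizer_def)
  qed
  moreover have "a + b \<in> ?S" if "a \<in> ?S" "b \<in> ?S" for a b
    using that assms(3) by (auto simp: mult_stabilizer_def is_subspace_over_def distrib_right)
  moreover have "a * b \<in> ?S" if "a \<in> ?S" "b \<in> ?S" for a b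
    using that by (auto simp: mult_stabilizer_def mult.assoc)
  moreover have "0 \<in> ?S" "1 \<in> ?S"
    using assms(3) by (auto simp: mult_stabilizer_def is_subspace_over_def)
  ultimately have "is_subfield ?S"
    using inverse_mem_mult_stabilizer[OF assms(1)] by (simp add: is_subfield_def)
  moreover have "is_subspace_over ?S U"
    using assms(3) by (auto simp: mult_stabilizer_def is_subspace_over_def)
  ultimately show ?thesis using K by (simp add: friend_def)
qed

lemma best_friend_eq_mult_stabilizer:
  fixes U :: "'a::{field,finite} set"
  assumes "is_subfield K" "is_subspace_over K U" "best_friend K U B"
  shows "B = mult_stabilizer U"
proof (rule card_seteq)
  show "B \<subseteq> mult_stabilizer U"
    using assms(3) friend_subset_mult_stabilizer by (auto simp: best_friend_def)
  show "card (mult_stabilizer U) \<le> card B"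
    using assms friend_mult_stabilizer[OF finite] by (auto simp: best_friend_def)
qed simp

lemma is_subfield_INT:
  assumes "\<And>i. i \<in> I \<Longrightarrow> is_subfield (S i)"
  shows "is_subfield (\<Inter>i\<in>I. S i)"
  using assms unfolding is_subfield_def by auto

lemma is_subspace_over_subset:
  "is_subspace_over L U \<Longrightarrow> L' \<subseteq> L \<Longrightarrow> is_subspace_over L' U"
  by (auto simp: is_subspace_over_def)

lemma friend_INT:
  assumes "\<And>i. i \<in> I \<Longrightarrow> friend K (U i) (L i)" "j \<in> I"
  shows "friend K (U j) (\<Inter>i\<in>I. L i)"
proof -
  have L: "is_subfield (L i)" "K \<subseteq> L i" "is_subspace_over (L i) (U i)" if "i \<in> I" for i
    using assms(1)[OF that] by (simp_all add: friend_def)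
  have "is_subfield (\<Inter>i\<in>I. L i)" using L(1) by (rule is_subfield_INT)
  moreover have "K \<subseteq> (\<Inter>i\<in>I. L i)" using L(2) by (rule INT_greatest)
  moreover have "is_subspace_over (\<Inter>i\<in>I. L i) (U j)"
    using L(3)[OF assms(2)] INT_lower[OF assms(2)] by (rule is_subspace_over_subset)
  ultimately show ?thesis by (simp add: friend_def)
qed

theorem corollary3p18:
  fixes K :: "'a::{field,finite} set" and q n r :: nat and F :: "nat \<Rightarrow> 'a set"
    and B :: "nat \<Rightarrow> 'a set"
  assumes "\<exists>p k. prime p \<and> 0 < k \<and> q = p ^ k"
    and "is_subfield K" and "card K = q" and "card (UNIV :: 'a set) = q ^ n"
    and "is_flag K r F"
    and "\<forall>i\<in>{1..r}. best_friend K (F i) (B i)"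
  shows "flag_best_friend K r F (\<Inter>i\<in>{1..r}. B i) \<and>
         (1 \<in> F 1 \<longrightarrow> (\<forall>L. flag_friend K r F L \<longrightarrow> L \<subseteq> F 1))"
proof -
  have r: "1 \<le> r" and subspace: "\<And>i. i \<in> {1..r} \<Longrightarrow> is_subspace_over K (F i)"
    using assms(5) by (auto simp: is_flag_def)
  have B: "\<And>i. i \<in> {1..r} \<Longrightarrow> B i = mult_stabilizer (F i)"
    using best_friend_eq_mult_stabilizer assms(2,6) subspace by blast
  have "flag_friend K r F (\<Inter>i\<in>{1..r}. B i)"
    unfolding flag_friend_def using assms(6)
    by (intro ballI friend_INT) (auto simp: best_friend_def)
  moreover have "L \<subseteq> (\<Inter>i\<in>{1..r}. B i)" if "flag_friend K r F L" for L
    using that friend_subset_mult_stabilizer B by (fastforce simp: flag_friend_def)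
  ultimately have "flag_best_friend K r F (\<Inter>i\<in>{1..r}. B i)"
    by (simp add: flag_best_friend_def card_mono)
  moreover have "L \<subseteq> F 1" if "1 \<in> F 1" "flag_friend K r F L" for L
  proof (rule friend_subset_if_one_mem)
    show "friend K (F 1) L" using that(2) r by (simp add: flag_friend_def)
  qed (fact that(1))
  ultimately show ?thesis by blast
qed

end
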